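(* Let $G\subseteq\mathrm{O}_n(\mathbb{R})$ be a finite group, let $H$ be a subgroup of $G$, and let $\phi:\mathbb{R}[\underline{X}]^G\to\mathbb{R}$ be a ring homomorphism such that $\phi(\langle df,df\rangle)\ge0$ for all $f\in\mathbb{R}[\underline{X}]^G$. Suppose $\phi$ extends to a ring homomorphism $\phi_H:\mathbb{R}[\underline{X}]^H\to\mathbb{R}$. Then $\phi_H(\langle df,df\rangle)\ge0$ for all $f\in\mathbb{R}[\underline{X}]^H$.
   Context: $\mathbb{R}[\underline{X}]=\mathbb{R}[X_1,\dots,X_n]$, and $\mathbb{R}[\underline{X}]^K$ denotes the ring of polynomials invariant under a subgroup $K$ acting by $h^\sigma(x)=h(\sigma^{-1}x)$. For a polynomial $p$, $\langle dp,dp\rangle=\sum_{j=1}^n\left(\frac{\partial p}{\partial X_j}\right)^2$; for $K$-invariant $p$ this is $K$-invariant. *)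

theory Defs
  imports "HOL-Analysis.Analysis"
begin

text \<open>Polynomials in X_1..X_n over the reals, represented (faithfully, since R is an infinite
field) as polynomial functions on R^n, with the index type 'n of cardinality n.\<close>

inductive_set poly_funs :: "(real^'n \<Rightarrow> real) set" where
  const: "(\<lambda>x. c) \<in> poly_funs"
| coord: "(\<lambda>x. x $ i) \<in> poly_funs"
| add: "f \<in> poly_funs \<Longrightarrow> g \<in> poly_funs \<Longrightarrow> (\<lambda>x. f x + g x) \<in> poly_funs"
| mult: "f \<in> poly_funs \<Longrightarrow> g \<in> poly_funs \<Longrightarrow> (\<lambda>x. f x * g x) \<in> poly_funs"

definition finite_orth_group :: "(real^'n^'n) set \<Rightarrow> bool" where
  "finite_orth_group G \<longleftrightarrow> finite G \<and> (\<forall>A\<in>G. orthogonal_matrix A) \<and> mat 1 \<in> G \<and>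
     (\<forall>A\<in>G. \<forall>B\<in>G. A ** B \<in> G) \<and> (\<forall>A\<in>G. matrix_inv A \<in> G)"

definition matrix_subgroup :: "(real^'n^'n) set \<Rightarrow> (real^'n^'n) set \<Rightarrow> bool" where
  "matrix_subgroup H G \<longleftrightarrow> H \<subseteq> G \<and> mat 1 \<in> H \<and>
     (\<forall>A\<in>H. \<forall>B\<in>H. A ** B \<in> H) \<and> (\<forall>A\<in>H. matrix_inv A \<in> H)"

definition inv_polys :: "(real^'n^'n) set \<Rightarrow> (real^'n \<Rightarrow> real) set" where
  "inv_polys K = {f \<in> poly_funs. \<forall>\<sigma>\<in>K. \<forall>x. f (matrix_inv \<sigma> *v x) = f x}"

definition ring_hom_on :: "(real^'n \<Rightarrow> real) set \<Rightarrow> ((real^'n \<Rightarrow> real) \<Rightarrow> real) \<Rightarrow> bool" where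
  "ring_hom_on S \<phi> \<longleftrightarrow> \<phi> (\<lambda>x. 1) = 1 \<and>
     (\<forall>f\<in>S. \<forall>g\<in>S. \<phi> (\<lambda>x. f x + g x) = \<phi> f + \<phi> g) \<and>
     (\<forall>f\<in>S. \<forall>g\<in>S. \<phi> (\<lambda>x. f x * g x) = \<phi> f * \<phi> g)"

definition partial_deriv :: "(real^'n \<Rightarrow> real) \<Rightarrow> 'n \<Rightarrow> real^'n \<Rightarrow> real" where
  "partial_deriv f j x = deriv (\<lambda>t. f (x + t *\<^sub>R axis j 1)) 0"

definition dd :: "(real^'n \<Rightarrow> real) \<Rightarrow> real^'n \<Rightarrow> real" where
  "dd p = (\<lambda>x. \<Sum>j\<in>UNIV. (partial_deriv p j x)^2)"

end

theory Submission
  imports Defs "HOL-Computational_Algebra.Fundamental_Theorem_Algebra"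
begin

text \<open>
  A ring homomorphism \<open>\<phi>\<close> from the invariant ring \<open>R[X]^G\<close> to \<open>R\<close> is evaluation at a point
  \<open>z\<close> of \<open>C^n\<close>. Each coordinate \<open>X_j\<close> is a root of the monic polynomial
  \<open>prod_(g in G) (T - (g X)_j)\<close> with invariant coefficients, so \<open>\<phi>\<close> leaves finitely many
  candidates for every coordinate of \<open>z\<close>. If no point of this finite grid worked, a product of
  separating invariants would vanish on the grid; a power of it then lies in the ideal generated
  by the images of these polynomials, and averaging over \<open>G\<close> moves it into the kernel of \<open>\<phi>\<close>.

  The point \<open>z\<close> is real: otherwise averaging over \<open>G\<close> a polynomial with prescribed gradient on
  the orbit of \<open>z\<close> and of its conjugate yields an invariant \<open>f\<close> with
  \<open>\<phi> <df,df> = -4 |G|^2 |Im z|^2 < 0\<close>. Finally, an extension \<open>\<phi>_H\<close> to \<open>R[X]^H\<close> is evaluation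
  at a point of the \<open>G\<close>-orbit of \<open>z\<close> (lying over), hence at a real point \<open>x\<close>, and
  \<open>\<phi>_H <df,df> = <df,df>(x) \<ge> 0\<close>.
\<close>

section \<open>Finite orthogonal groups and invariant polynomials\<close>

lemma orthogonal_matrix_inv:
  assumes "orthogonal_matrix (A::real^'n^'n)"
  shows "matrix_inv A = transpose A"
proof -
  have AAt: "A ** transpose A = mat 1" and AtA: "transpose A ** A = mat 1"
    using assms by (auto simp: orthogonal_matrix_def)
  have "A ** matrix_inv A = mat 1 \<and> matrix_inv A ** A = mat 1"
    unfolding matrix_inv_def by (rule someI[where x="transpose A"]) (simp add: AAt AtA)
  then have "transpose A ** (A ** matrix_inv A) = transpose A" by simp
  then show ?thesis by (simp add: matrix_mul_assoc AtA)
qed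

lemma finite_orth_group_subgroup:
  "finite_orth_group G \<Longrightarrow> matrix_subgroup H G \<Longrightarrow> finite_orth_group H"
  unfolding finite_orth_group_def matrix_subgroup_def by (auto intro: finite_subset)

lemma finite_orth_group_transpose:
  "finite_orth_group K \<Longrightarrow> A \<in> K \<Longrightarrow> transpose A \<in> K"
  unfolding finite_orth_group_def by (metis orthogonal_matrix_inv)

lemma bij_betw_mult_right_group:
  assumes K: "finite_orth_group K" and "\<sigma> \<in> K"
  shows "bij_betw (\<lambda>g. g ** \<sigma>) K K"
proof (rule bij_betwI[where g="\<lambda>g. g ** transpose \<sigma>"])
  have \<sigma>: "transpose \<sigma> \<in> K" "orthogonal_matrix \<sigma>"
    using assms finite_orth_group_transpose by (auto simp: finite_orth_group_def)
  then show "(\<lambda>g. g ** \<sigma>) \<in> K \<rightarrow> K" "(\<lambda>g. g ** transpose \<sigma>) \<in> K \<rightarrow> K"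
    using assms by (auto simp: finite_orth_group_def)
  show "g ** \<sigma> ** transpose \<sigma> = g" "g ** transpose \<sigma> ** \<sigma> = g" for g
    using \<sigma>(2) by (simp_all add: orthogonal_matrix_def flip: matrix_mul_assoc)
qed

lemma sum_group_reindex:
  "finite_orth_group K \<Longrightarrow> \<sigma> \<in> K \<Longrightarrow> (\<Sum>g\<in>K. f (g ** \<sigma>)) = (\<Sum>g\<in>K. f g)"
  using sum.reindex_bij_betw[OF bij_betw_mult_right_group] .

lemma prod_group_reindex:
  "finite_orth_group K \<Longrightarrow> \<sigma> \<in> K \<Longrightarrow> (\<Prod>g\<in>K. f (g ** \<sigma>)) = (\<Prod>g\<in>K. f g)"
  using prod.reindex_bij_betw[OF bij_betw_mult_right_group] .

lemma inv_polys_iff: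
  assumes K: "finite_orth_group K"
  shows "f \<in> inv_polys K \<longleftrightarrow> f \<in> poly_funs \<and> (\<forall>\<sigma>\<in>K. \<forall>x. f (\<sigma> *v x) = f x)"
proof -
  have inv: "matrix_inv \<sigma> = transpose \<sigma>" "transpose \<sigma> \<in> K" if "\<sigma> \<in> K" for \<sigma>
    using K that finite_orth_group_transpose[OF K]
    by (auto simp: finite_orth_group_def orthogonal_matrix_inv)
  have "(\<forall>\<sigma>\<in>K. \<forall>x. f (transpose \<sigma> *v x) = f x) \<longleftrightarrow> (\<forall>\<sigma>\<in>K. \<forall>x. f (\<sigma> *v x) = f x)"
    using inv(2) by (metis transpose_transpose)
  then show ?thesis unfolding inv_polys_def using inv(1) by auto
qed

section \<open>Rings of functions and their homomorphisms\<close>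

locale fun_subring =
  fixes S :: "('a \<Rightarrow> 'b::comm_ring_1) set"
  assumes const_closed: "(\<lambda>x. c) \<in> S"
    and add_closed: "f \<in> S \<Longrightarrow> g \<in> S \<Longrightarrow> (\<lambda>x. f x + g x) \<in> S"
    and mult_closed: "f \<in> S \<Longrightarrow> g \<in> S \<Longrightarrow> (\<lambda>x. f x * g x) \<in> S"
begin

lemma diff_closed: "f \<in> S \<Longrightarrow> g \<in> S \<Longrightarrow> (\<lambda>x. f x - g x) \<in> S"
  using add_closed[OF _ mult_closed[OF const_closed[of "-1"]]] by simp

lemma sum_closed: "finite I \<Longrightarrow> (\<And>i. i \<in> I \<Longrightarrow> f i \<in> S) \<Longrightarrow> (\<lambda>x. \<Sum>i\<in>I. f i x) \<in> S"
proof (induction I rule: finite_induct)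
  case (insert a I)
  then show ?case using add_closed[of "f a" "\<lambda>x. \<Sum>i\<in>I. f i x"] by simp
qed (simp add: const_closed)

lemma prod_closed: "finite I \<Longrightarrow> (\<And>i. i \<in> I \<Longrightarrow> f i \<in> S) \<Longrightarrow> (\<lambda>x. \<Prod>i\<in>I. f i x) \<in> S"
proof (induction I rule: finite_induct)
  case (insert a I)
  then show ?case using mult_closed[of "f a" "\<lambda>x. \<Prod>i\<in>I. f i x"] by simp
qed (simp add: const_closed)

lemma power_closed: "f \<in> S \<Longrightarrow> (\<lambda>x. f x ^ k) \<in> S"
  using prod_closed[of "{..<k}" "\<lambda>_. f"] by simp

end

interpretation poly_funs: fun_subring poly_funs
  by unfold_locales (rule poly_funs.const, erule (1) poly_funs.add, erule (1) poly_funs.mult)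

lemma fun_subring_inv_polys: "fun_subring (inv_polys K)"
  by unfold_locales (auto simp: inv_polys_def intro: poly_funs.intros)

lemma poly_funs_linear: "(\<lambda>x. ((A::real^'n^'n) *v x) $ k) \<in> poly_funs"
  unfolding matrix_vector_mult_def
  by (auto intro!: poly_funs.sum_closed poly_funs.intros)

lemma poly_funs_compose_matrix: "f \<in> poly_funs \<Longrightarrow> (\<lambda>x. f ((A::real^'n^'n) *v x)) \<in> poly_funs"
  by (induction rule: poly_funs.induct) (auto intro: poly_funs.intros poly_funs_linear)

lemma real_ring_endomorphism_Rats:
  fixes \<psi> :: "real \<Rightarrow> real"
  assumes one: "\<psi> 1 = 1" and add: "\<And>a b. \<psi> (a + b) = \<psi> a + \<psi> b"
    and mult: "\<And>a b. \<psi> (a * b) = \<psi> a * \<psi> b" and r: "r \<in> \<rat>"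
  shows "\<psi> r = r"
proof -
  have zero: "\<psi> 0 = 0" using add[of 0 0] by simp
  have minus: "\<psi> (- a) = - \<psi> a" for a using add[of a "- a"] zero by simp
  have nat: "\<psi> (of_nat n) = of_nat n" for n
  proof (induction n)
    case (Suc n)
    then show ?case using add[of 1 "of_nat n"] by (simp add: one)
  qed (simp add: zero)
  have int: "\<psi> (of_int k) = of_int k" for k
  proof (cases "k \<ge> 0")
    case True
    then show ?thesis using nat[of "nat k"] by simp
  next
    case False
    then show ?thesis using nat[of "nat (- k)"] minus[of "of_int (- k)"] by simp
  qed
  from r obtain a b where "b > 0" "r = of_int a / of_int b" by (rule Rats_cases')
  then have "of_int b * \<psi> r = of_int b * r"
    using mult[of "of_int b" r] by (simp add: int)
  then show ?thesis using \<open>b > 0\<close> by simp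
qed

lemma real_ring_endomorphism_id:
  fixes \<psi> :: "real \<Rightarrow> real"
  assumes one: "\<psi> 1 = 1" and add: "\<And>a b. \<psi> (a + b) = \<psi> a + \<psi> b"
    and mult: "\<And>a b. \<psi> (a * b) = \<psi> a * \<psi> b"
  shows "\<psi> c = c"
proof -
  have rat: "\<psi> r = r" if "r \<in> \<rat>" for r
    using real_ring_endomorphism_Rats[OF assms that] .
  \<comment> \<open>nonnegative reals are squares\<close>
  have mono: "\<psi> a \<le> \<psi> b" if "a \<le> b" for a b
  proof -
    have "b = a + sqrt (b - a) * sqrt (b - a)" using that by simp
    then have "\<psi> b = \<psi> a + \<psi> (sqrt (b - a)) * \<psi> (sqrt (b - a))"
      using add mult by metis
    then show ?thesis by simp
  qed
  show ?thesis
  proof (rule ccontr)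
    assume "\<psi> c \<noteq> c"
    then consider "\<psi> c < c" | "c < \<psi> c" by linarith
    then show False
    proof cases
      case 1
      then obtain r where "r \<in> \<rat>" "\<psi> c < r" "r < c" using Rats_dense_in_real by blast
      then show False using mono[of r c] rat by simp
    next
      case 2
      then obtain r where "r \<in> \<rat>" "c < r" "r < \<psi> c" using Rats_dense_in_real by blast
      then show False using mono[of c r] rat by simp
    qed
  qed
qed

locale subring_hom = fun_subring S for S :: "(real^'n \<Rightarrow> real) set" +
  fixes \<phi> :: "(real^'n \<Rightarrow> real) \<Rightarrow> real"
  assumes hom: "ring_hom_on S \<phi>"
begin

lemma hom_add: "f \<in> S \<Longrightarrow> g \<in> S \<Longrightarrow> \<phi> (\<lambda>x. f x + g x) = \<phi> f + \<phi> g"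
  and hom_mult: "f \<in> S \<Longrightarrow> g \<in> S \<Longrightarrow> \<phi> (\<lambda>x. f x * g x) = \<phi> f * \<phi> g"
  using hom by (simp_all add: ring_hom_on_def)

lemma hom_const: "\<phi> (\<lambda>x. c) = c"
  using real_ring_endomorphism_id[of "\<lambda>c. \<phi> (\<lambda>x. c)"] hom
  by (simp add: ring_hom_on_def const_closed)

lemma hom_diff: "f \<in> S \<Longrightarrow> g \<in> S \<Longrightarrow> \<phi> (\<lambda>x. f x - g x) = \<phi> f - \<phi> g"
  using hom_add[OF _ mult_closed[OF const_closed[of "-1"]], of f g]
    hom_mult[OF const_closed[of "-1"], of g] by (simp add: hom_const)

lemma hom_sum: "finite I \<Longrightarrow> (\<And>i. i \<in> I \<Longrightarrow> f i \<in> S) \<Longrightarrow> \<phi> (\<lambda>x. \<Sum>i\<in>I. f i x) = (\<Sum>i\<in>I. \<phi> (f i))"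
  by (induction I rule: finite_induct) (simp_all add: hom_const hom_add sum_closed)

lemma hom_prod: "finite I \<Longrightarrow> (\<And>i. i \<in> I \<Longrightarrow> f i \<in> S) \<Longrightarrow> \<phi> (\<lambda>x. \<Prod>i\<in>I. f i x) = (\<Prod>i\<in>I. \<phi> (f i))"
  by (induction I rule: finite_induct) (simp_all add: hom_const hom_mult prod_closed)

lemma hom_power: "f \<in> S \<Longrightarrow> \<phi> (\<lambda>x. f x ^ k) = \<phi> f ^ k"
  using hom_prod[of "{..<k}" "\<lambda>_. f"] by simp

end

lemma subring_hom_inv_polys: "ring_hom_on (inv_polys K) \<phi> \<Longrightarrow> subring_hom (inv_polys K) \<phi>"
  by (simp add: subring_hom_def subring_hom_axioms_def fun_subring_inv_polys)

section \<open>Complex polynomial functions\<close>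

inductive_set cpoly_funs :: "(complex^'n \<Rightarrow> complex) set" where
  const: "(\<lambda>z. c) \<in> cpoly_funs"
| coord: "(\<lambda>z. z $ i) \<in> cpoly_funs"
| add: "F \<in> cpoly_funs \<Longrightarrow> G \<in> cpoly_funs \<Longrightarrow> (\<lambda>z. F z + G z) \<in> cpoly_funs"
| mult: "F \<in> cpoly_funs \<Longrightarrow> G \<in> cpoly_funs \<Longrightarrow> (\<lambda>z. F z * G z) \<in> cpoly_funs"

interpretation cpoly_funs: fun_subring cpoly_funs
  by unfold_locales (rule cpoly_funs.const, erule (1) cpoly_funs.add, erule (1) cpoly_funs.mult)

lemma cpoly_funs_poly_coord: "(\<lambda>z. poly p (z $ j)) \<in> cpoly_funs"
  unfolding poly_altdef
  by (intro cpoly_funs.sum_closed cpoly_funs.mult_closed cpoly_funs.power_closed cpoly_funs.intros) auto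

definition cvec :: "real^'n \<Rightarrow> complex^'n" where
  "cvec x = (\<chi> j. complex_of_real (x $ j))"

definition cmat :: "real^'n^'n \<Rightarrow> complex^'n^'n" where
  "cmat A = (\<chi> i j. complex_of_real (A $ i $ j))"

definition cnjv :: "complex^'n \<Rightarrow> complex^'n" where
  "cnjv z = (\<chi> j. cnj (z $ j))"

definition imv :: "complex^'n \<Rightarrow> real^'n" where
  "imv z = (\<chi> j. Im (z $ j))"

lemma cvec_nth [simp]: "cvec x $ j = complex_of_real (x $ j)"
  and cmat_nth [simp]: "cmat A $ i $ j = complex_of_real (A $ i $ j)"
  and cnjv_nth [simp]: "cnjv z $ j = cnj (z $ j)"
  and imv_nth [simp]: "imv z $ j = Im (z $ j)"
  by (simp_all add: cvec_def cmat_def cnjv_def imv_def)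

lemma cmat_mult_cvec: "cmat A *v cvec x = cvec (A *v x)"
  by (simp add: vec_eq_iff matrix_vector_mult_def)

lemma cnjv_cvec [simp]: "cnjv (cvec x) = cvec x"
  and cnjv_cnjv [simp]: "cnjv (cnjv z) = z"
  and imv_cmat_mult: "imv (cmat A *v z) = A *v imv z"
  by (simp_all add: vec_eq_iff matrix_vector_mult_def Im_sum)

lemma exists_cvec_iff_imv_eq_0: "(\<exists>x. z = cvec x) \<longleftrightarrow> imv z = 0"
proof
  assume "imv z = 0"
  then have "z = cvec (\<chi> j. Re (z $ j))" by (simp add: vec_eq_iff complex_eq_iff)
  then show "\<exists>x. z = cvec x" ..
qed (auto simp: vec_eq_iff)

lemma cpoly_funs_compose_matrix: "F \<in> cpoly_funs \<Longrightarrow> (\<lambda>z. F (cmat A *v z)) \<in> cpoly_funs"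
proof (induction rule: cpoly_funs.induct)
  case (coord i)
  show ?case unfolding matrix_vector_mult_def
    by (auto intro!: cpoly_funs.sum_closed cpoly_funs.intros)
qed (auto intro: cpoly_funs.intros)

lemma cpoly_funs_cnj: "F \<in> cpoly_funs \<Longrightarrow> (\<lambda>z. cnj (F (cnjv z))) \<in> cpoly_funs"
  by (induction rule: cpoly_funs.induct) (auto intro: cpoly_funs.intros)

lemma poly_funs_Re_Im:
  "F \<in> cpoly_funs \<Longrightarrow> (\<lambda>x. Re (F (cvec x))) \<in> poly_funs \<and> (\<lambda>x. Im (F (cvec x))) \<in> poly_funs"
  by (induction rule: cpoly_funs.induct) (auto intro: poly_funs.intros poly_funs.diff_closed)

text \<open>A real polynomial function is related to its complex extensions only through this predicate.\<close>

definition cpoly_extends :: "(complex^'n \<Rightarrow> complex) \<Rightarrow> (real^'n \<Rightarrow> real) \<Rightarrow> bool" where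
  "cpoly_extends F f \<longleftrightarrow> F \<in> cpoly_funs \<and> (\<forall>x. F (cvec x) = complex_of_real (f x))"

lemma cpoly_extends_poly_funs: "cpoly_extends F f \<Longrightarrow> f \<in> poly_funs"
  using poly_funs_Re_Im[of F] by (simp add: cpoly_extends_def)

lemma poly_funs_obtain_cpoly_extension:
  assumes "f \<in> poly_funs"
  obtains F where "cpoly_extends F f"
proof -
  from assms have "\<exists>F. cpoly_extends F f"
  proof (induction rule: poly_funs.induct)
    case (const c)
    show ?case by (rule exI[of _ "\<lambda>z. complex_of_real c"]) (simp add: cpoly_extends_def cpoly_funs.const)
  next
    case (coord i)
    show ?case by (rule exI[of _ "\<lambda>z. z $ i"]) (simp add: cpoly_extends_def cpoly_funs.coord)
  next
    case (add f g)
    then obtain F G where "cpoly_extends F f" "cpoly_extends G g" by blast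
    then show ?case by (intro exI[of _ "\<lambda>z. F z + G z"]) (simp add: cpoly_extends_def cpoly_funs.add)
  next
    case (mult f g)
    then obtain F G where "cpoly_extends F f" "cpoly_extends G g" by blast
    then show ?case by (intro exI[of _ "\<lambda>z. F z * G z"]) (simp add: cpoly_extends_def cpoly_funs.mult)
  qed
  then show ?thesis using that by blast
qed

lemma cpoly_extends_compose_matrix:
  "cpoly_extends F f \<Longrightarrow> cpoly_extends (\<lambda>z. F (cmat A *v z)) (\<lambda>x. f (A *v x))"
  by (simp add: cpoly_extends_def cpoly_funs_compose_matrix cmat_mult_cvec)

section \<open>Partial derivatives\<close>

definition cpartial :: "'n \<Rightarrow> (complex^'n \<Rightarrow> complex) \<Rightarrow> complex^'n \<Rightarrow> complex" where
  "cpartial j F z = deriv (\<lambda>s. F (z + axis j s)) 0"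

lemma cpoly_funs_has_partial_derivative:
  "F \<in> cpoly_funs \<Longrightarrow>
    \<exists>D\<in>cpoly_funs. \<forall>z t. ((\<lambda>s. F (z + axis j s)) has_field_derivative D (z + axis j t)) (at t)"
proof (induction rule: cpoly_funs.induct)
  case (const c)
  show ?case by (rule bexI[of _ "\<lambda>z. 0"]) (auto intro: cpoly_funs.const)
next
  case (coord i)
  show ?case
    by (rule bexI[of _ "\<lambda>z. if i = j then 1 else 0"])
      (auto simp: axis_def intro: cpoly_funs.const intro!: derivative_eq_intros)
next
  case (add F G)
  then obtain D E where "D \<in> cpoly_funs" "E \<in> cpoly_funs"
    "\<forall>z t. ((\<lambda>s. F (z + axis j s)) has_field_derivative D (z + axis j t)) (at t)"
    "\<forall>z t. ((\<lambda>s. G (z + axis j s)) has_field_derivative E (z + axis j t)) (at t)" by blast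
  then show ?case
    by (intro bexI[of _ "\<lambda>z. D z + E z"]) (auto intro!: derivative_eq_intros cpoly_funs.add)
next
  case (mult F G)
  then obtain D E where "D \<in> cpoly_funs" "E \<in> cpoly_funs"
    "\<forall>z t. ((\<lambda>s. F (z + axis j s)) has_field_derivative D (z + axis j t)) (at t)"
    "\<forall>z t. ((\<lambda>s. G (z + axis j s)) has_field_derivative E (z + axis j t)) (at t)" by blast
  with mult.hyps show ?case
    by (intro bexI[of _ "\<lambda>z. D z * G z + E z * F z"]) (auto intro!: DERIV_mult cpoly_funs.intros)
qed

lemma axis_zero [simp]: "axis j (0::'a::zero) = 0"
  by (simp add: axis_def vec_eq_iff)

lemma cpartial_cpoly_funs:
  assumes "F \<in> cpoly_funs"
  shows "cpartial j F \<in> cpoly_funs"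
    and "((\<lambda>s. F (z + axis j s)) has_field_derivative cpartial j F (z + axis j t)) (at t)"
proof -
  obtain D where D: "D \<in> cpoly_funs"
    "\<And>z t. ((\<lambda>s. F (z + axis j s)) has_field_derivative D (z + axis j t)) (at t)"
    using cpoly_funs_has_partial_derivative[OF assms] by blast
  have "cpartial j F = D"
    unfolding cpartial_def using D(2)[of _ 0] by (auto intro!: DERIV_imp_deriv)
  then show "cpartial j F \<in> cpoly_funs"
    and "((\<lambda>s. F (z + axis j s)) has_field_derivative cpartial j F (z + axis j t)) (at t)"
    using D by simp_all
qed

lemma cpartial_eqI: "((\<lambda>s. F (z + axis j s)) has_field_derivative D) (at 0) \<Longrightarrow> cpartial j F z = D"
  unfolding cpartial_def by (rule DERIV_imp_deriv)

lemma has_field_derivative_cpartial_0: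
  "F \<in> cpoly_funs \<Longrightarrow> ((\<lambda>s. F (z + axis j s)) has_field_derivative cpartial j F z) (at 0)"
  using cpartial_cpoly_funs(2)[of F z j 0] by simp

lemma cpartial_const [simp]: "cpartial j (\<lambda>z. c) w = 0"
  and cpartial_coord [simp]: "cpartial j (\<lambda>z. z $ i) w = (if i = j then 1 else 0)"
  by (rule cpartial_eqI; auto simp: axis_def intro!: derivative_eq_intros)+

lemma cpartial_add:
  "F \<in> cpoly_funs \<Longrightarrow> G \<in> cpoly_funs \<Longrightarrow> cpartial j (\<lambda>z. F z + G z) w = cpartial j F w + cpartial j G w"
  and cpartial_mult:
  "F \<in> cpoly_funs \<Longrightarrow> G \<in> cpoly_funs \<Longrightarrow>
    cpartial j (\<lambda>z. F z * G z) w = cpartial j F w * G w + F w * cpartial j G w"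
  by (rule cpartial_eqI; auto intro!: derivative_eq_intros has_field_derivative_cpartial_0)+

lemma cpartial_sum:
  "finite I \<Longrightarrow> (\<And>i. i \<in> I \<Longrightarrow> F i \<in> cpoly_funs) \<Longrightarrow>
    cpartial j (\<lambda>z. \<Sum>i\<in>I. F i z) w = (\<Sum>i\<in>I. cpartial j (F i) w)"
proof (induction I rule: finite_induct)
  case (insert a I)
  then show ?case
    using cpartial_add[of "F a" "\<lambda>z. \<Sum>i\<in>I. F i z" j w] cpoly_funs.sum_closed[of I F] by simp
qed simp

lemma cpartial_compose_matrix:
  "F \<in> cpoly_funs \<Longrightarrow>
    cpartial j (\<lambda>z. F (cmat A *v z)) w = (\<Sum>k\<in>UNIV. of_real (A $ k $ j) * cpartial k F (cmat A *v w))"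
proof (induction rule: cpoly_funs.induct)
  case (coord i)
  have "cpartial j (\<lambda>z. (cmat A *v z) $ i) w = (\<Sum>l\<in>UNIV. of_real (A $ i $ l) * cpartial j (\<lambda>z. z $ l) w)"
    unfolding matrix_vector_mult_def
    by (simp add: cpartial_sum cpartial_mult cpoly_funs.intros cpoly_funs.mult_closed)
  then show ?case by (simp add: if_distrib cong: if_cong)
next
  case (add F G)
  then show ?case
    by (simp add: cpartial_add cpoly_funs_compose_matrix sum.distrib algebra_simps)
next
  case (mult F G)
  then show ?case
    by (simp add: cpartial_mult cpoly_funs_compose_matrix sum.distrib sum_distrib_left
        sum_distrib_right algebra_simps)
qed simp

lemma cpartial_cnj:
  "F \<in> cpoly_funs \<Longrightarrow> cpartial j (\<lambda>z. cnj (F (cnjv z))) w = cnj (cpartial j F (cnjv w))"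
  by (induction rule: cpoly_funs.induct) (simp_all add: cpartial_add cpartial_mult cpoly_funs_cnj)

lemma cpoly_extends_partial_deriv:
  assumes F: "cpoly_extends F f"
  shows "cpoly_extends (cpartial j F) (partial_deriv f j)"
proof -
  have cpf: "F \<in> cpoly_funs" using F by (simp add: cpoly_extends_def)
  have "cpartial j F (cvec x) = of_real (partial_deriv f j x)" for x
  proof -
    have line: "(\<lambda>t. F (cvec x + axis j (of_real t))) = (\<lambda>t. of_real (f (x + t *\<^sub>R axis j 1)))"
    proof
      fix t
      have "cvec x + axis j (of_real t) = cvec (x + t *\<^sub>R axis j 1)"
        by (simp add: vec_eq_iff axis_def)
      then show "F (cvec x + axis j (of_real t)) = of_real (f (x + t *\<^sub>R axis j 1))"
        using F by (simp add: cpoly_extends_def)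
    qed
    have "((\<lambda>s. F (cvec x + axis j s)) has_field_derivative cpartial j F (cvec x)) (at (of_real 0))"
      using cpartial_cpoly_funs(2)[OF cpf, of "cvec x" j 0] by simp
    from has_vector_derivative_real_field[OF this]
    have "((\<lambda>t. of_real (f (x + t *\<^sub>R axis j 1))) has_vector_derivative cpartial j F (cvec x)) (at 0)"
      by (simp only: line)
    then have Re: "((\<lambda>t. f (x + t *\<^sub>R axis j 1)) has_real_derivative Re (cpartial j F (cvec x))) (at 0)"
      and Im: "((\<lambda>t. 0) has_real_derivative Im (cpartial j F (cvec x))) (at 0)"
      by (simp_all add: has_vector_derivative_complex_iff)
    have "Im (cpartial j F (cvec x)) = 0"
      using DERIV_unique[OF Im DERIV_const] .
    moreover have "partial_deriv f j x = Re (cpartial j F (cvec x))"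
      unfolding partial_deriv_def using Re by (rule DERIV_imp_deriv)
    ultimately show ?thesis by (simp add: complex_eq_iff)
  qed
  then show ?thesis by (simp add: cpoly_extends_def cpartial_cpoly_funs(1)[OF cpf])
qed

definition cdd :: "(complex^'n \<Rightarrow> complex) \<Rightarrow> complex^'n \<Rightarrow> complex" where
  "cdd F = (\<lambda>z. \<Sum>j\<in>UNIV. (cpartial j F z)^2)"

lemma cpoly_extends_dd: "cpoly_extends F f \<Longrightarrow> cpoly_extends (cdd F) (dd f)"
  using cpoly_extends_partial_deriv[of F f]
  unfolding cpoly_extends_def cdd_def dd_def
  by (auto intro!: cpoly_funs.sum_closed cpoly_funs.power_closed)

lemma norm_transpose_orthogonal_matrix:
  assumes "orthogonal_matrix (A::real^'n^'n)"
  shows "norm (transpose A *v v) = norm v"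
proof -
  have "orthogonal_transformation (\<lambda>v. transpose A *v v)"
    unfolding orthogonal_transformation_matrix
    using assms matrix_vector_mul_linear[of "transpose A"] matrix_of_matrix_vector_mul[of "transpose A"]
    by simp
  then show ?thesis by (rule orthogonal_transformation_norm)
qed

lemma dd_inv_polys:
  assumes K: "finite_orth_group K" and f: "f \<in> inv_polys K"
  shows "dd f \<in> inv_polys K"
proof -
  obtain F where F: "cpoly_extends F f"
    using poly_funs_obtain_cpoly_extension f by (auto simp: inv_polys_def)
  have F': "cpoly_extends (cpartial k F) (partial_deriv f k)" for k
    by (rule cpoly_extends_partial_deriv[OF F])
  define grad where "grad x = (\<chi> k. partial_deriv f k x)" for x
  have dd_grad: "dd f x = norm (grad x)^2" for x
    unfolding dd_def grad_def power2_norm_eq_inner inner_vec_def by (simp add: power2_eq_square)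
  have grad_chain: "grad x = transpose \<sigma> *v grad (\<sigma> *v x)" if \<sigma>: "\<sigma> \<in> K" for \<sigma> x
  proof -
    have "(\<lambda>x. f (\<sigma> *v x)) = f" using \<sigma> f by (simp add: inv_polys_iff[OF K] fun_eq_iff)
    then have F\<sigma>: "cpoly_extends (\<lambda>z. F (cmat \<sigma> *v z)) f"
      using cpoly_extends_compose_matrix[OF F, of \<sigma>] by simp
    have "partial_deriv f j x = (\<Sum>k\<in>UNIV. \<sigma> $ k $ j * partial_deriv f k (\<sigma> *v x))" for j
    proof -
      have "complex_of_real (partial_deriv f j x) = cpartial j (\<lambda>z. F (cmat \<sigma> *v z)) (cvec x)"
        using cpoly_extends_partial_deriv[OF F\<sigma>] by (simp add: cpoly_extends_def)
      also have "\<dots> = (\<Sum>k\<in>UNIV. of_real (\<sigma> $ k $ j) * cpartial k F (cvec (\<sigma> *v x)))"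
        using F by (simp add: cpartial_compose_matrix cpoly_extends_def cmat_mult_cvec)
      also have "\<dots> = of_real (\<Sum>k\<in>UNIV. \<sigma> $ k $ j * partial_deriv f k (\<sigma> *v x))"
        using F' by (simp add: cpoly_extends_def)
      finally show ?thesis by (simp only: of_real_eq_iff)
    qed
    then show ?thesis
      unfolding grad_def by (simp add: vec_eq_iff vector_matrix_mult_def mult.commute)
  qed
  have "dd f (\<sigma> *v x) = dd f x" if "\<sigma> \<in> K" for \<sigma> x
  proof -
    have "orthogonal_matrix \<sigma>" using that K by (simp add: finite_orth_group_def)
    then show ?thesis
      unfolding dd_grad grad_chain[OF that, of x] by (simp only: norm_transpose_orthogonal_matrix)
  qed
  moreover have "dd f \<in> poly_funs"
    using cpoly_extends_poly_funs[OF cpoly_extends_dd[OF F]] .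
  ultimately show ?thesis using K by (simp add: inv_polys_iff)
qed

section \<open>Orbit polynomials\<close>

lemma coeff_linear_mult:
  fixes c :: "'a::comm_ring_1"
  shows "coeff ([:- c, 1:] * p) k = - c * coeff p k + (if k = 0 then 0 else coeff p (k - 1))"
  by (cases k) auto

lemma degree_prod_linear:
  fixes a :: "'b \<Rightarrow> 'a::idom"
  shows "finite I \<Longrightarrow> degree (\<Prod>i\<in>I. [:- a i, 1:]) = card I"
  by (simp add: degree_prod_eq_sum_degree)

lemma coeff_prod_linear_card:
  fixes a :: "'b \<Rightarrow> 'a::idom"
  shows "finite I \<Longrightarrow> coeff (\<Prod>i\<in>I. [:- a i, 1:]) (card I) = 1"
  using lead_coeff_prod[of "\<lambda>i. [:- a i, 1:]" I] by (simp add: degree_prod_linear)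

lemma poly_prod_linear_eq_sum_coeff:
  fixes a :: "'b \<Rightarrow> 'a::idom"
  assumes "finite I"
  shows "poly (\<Prod>i\<in>I. [:- a i, 1:]) t = (\<Sum>k\<le>card I. coeff (\<Prod>i\<in>I. [:- a i, 1:]) k * t ^ k)"
  by (subst poly_altdef) (simp add: degree_prod_linear[OF assms])

lemma (in fun_subring) coeff_prod_linear_closed:
  "finite I \<Longrightarrow> (\<And>i. i \<in> I \<Longrightarrow> a i \<in> S) \<Longrightarrow> (\<lambda>x. coeff (\<Prod>i\<in>I. [:- a i x, 1:]) k) \<in> S"
proof (induction I arbitrary: k rule: finite_induct)
  case empty
  then show ?case by (simp add: coeff_1 const_closed)
next
  case (insert b I)
  have "(\<lambda>x. coeff (\<Prod>i\<in>insert b I. [:- a i x, 1:]) k) =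
      (\<lambda>x. (if k = 0 then 0 else coeff (\<Prod>i\<in>I. [:- a i x, 1:]) (k - 1))
        - a b x * coeff (\<Prod>i\<in>I. [:- a i x, 1:]) k)"
    using insert.hyps by (simp del: mult_pCons_left add: coeff_linear_mult)
  also have "\<dots> \<in> S"
    using insert by (intro diff_closed mult_closed) (cases "k = 0"; simp add: const_closed)+
  finally show ?case .
qed

lemma coeff_prod_linear_of_real:
  fixes b :: "'b \<Rightarrow> real"
  shows "finite I \<Longrightarrow>
    coeff (\<Prod>i\<in>I. [:- complex_of_real (b i), 1:]) k = of_real (coeff (\<Prod>i\<in>I. [:- b i, 1:]) k)"
  by (induction I arbitrary: k rule: finite_induct)
    (simp_all del: mult_pCons_left add: coeff_1 coeff_linear_mult)

lemma cpoly_extends_coeff_prod_linear: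
  assumes "finite I" "\<And>i. i \<in> I \<Longrightarrow> cpoly_extends (A i) (a i)"
  shows "cpoly_extends (\<lambda>z. coeff (\<Prod>i\<in>I. [:- A i z, 1:]) k) (\<lambda>x. coeff (\<Prod>i\<in>I. [:- a i x, 1:]) k)"
  using assms cpoly_funs.coeff_prod_linear_closed[OF assms(1), of A k]
  by (simp add: cpoly_extends_def coeff_prod_linear_of_real)

definition orbit_coeff :: "(real^'n^'n) set \<Rightarrow> (real^'n \<Rightarrow> real) \<Rightarrow> nat \<Rightarrow> real^'n \<Rightarrow> real" where
  "orbit_coeff K a k = (\<lambda>x. coeff (\<Prod>g\<in>K. [:- a (g *v x), 1:]) k)"

lemma orbit_coeff_inv_polys:
  assumes K: "finite_orth_group K" and a: "a \<in> poly_funs"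
  shows "orbit_coeff K a k \<in> inv_polys K"
  unfolding inv_polys_iff[OF K]
proof (intro conjI ballI allI)
  show "orbit_coeff K a k \<in> poly_funs"
    unfolding orbit_coeff_def using K a
    by (intro poly_funs.coeff_prod_linear_closed poly_funs_compose_matrix)
      (simp_all add: finite_orth_group_def)
  show "orbit_coeff K a k (\<sigma> *v x) = orbit_coeff K a k x" if "\<sigma> \<in> K" for \<sigma> x
    using prod_group_reindex[OF K that, of "\<lambda>g. [:- a (g *v x), 1:]"]
    by (simp add: orbit_coeff_def matrix_vector_mul_assoc)
qed

lemma orbit_coeff_card: "finite K \<Longrightarrow> orbit_coeff K a (card K) = (\<lambda>x. 1)"
  by (simp add: orbit_coeff_def coeff_prod_linear_card)

lemma orbit_coeff_root:
  assumes K: "finite_orth_group K"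
  shows "(\<Sum>k\<le>card K. orbit_coeff K a k x * a x ^ k) = 0"
proof -
  have "(\<Sum>k\<le>card K. orbit_coeff K a k x * a x ^ k) = (\<Prod>g\<in>K. a x - a (g *v x))"
    using K unfolding orbit_coeff_def
    by (simp add: finite_orth_group_def poly_prod flip: poly_prod_linear_eq_sum_coeff)
  also have "\<dots> = 0"
    using K by (intro prod_zero) (auto simp: finite_orth_group_def intro!: bexI[of _ "mat 1"])
  finally show ?thesis .
qed

section \<open>Polynomials vanishing on a finite grid\<close>

definition coord_ideal :: "('n \<Rightarrow> complex poly) \<Rightarrow> (complex^'n \<Rightarrow> complex) set" where
  "coord_ideal p =
    {F. \<exists>r. (\<forall>j. r j \<in> cpoly_funs) \<and> (\<forall>z. F z = (\<Sum>j\<in>UNIV. r j z * poly (p j) (z $ j)))}"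

lemma coord_ideal_cong: "F \<in> coord_ideal p \<Longrightarrow> (\<And>z. G z = F z) \<Longrightarrow> G \<in> coord_ideal p"
  unfolding coord_ideal_def by auto

lemma coord_ideal_zero: "(\<lambda>z. 0) \<in> coord_ideal p"
  unfolding coord_ideal_def by (rule CollectI, rule exI[of _ "\<lambda>j z. 0"]) (simp add: cpoly_funs.const)

lemma coord_ideal_add:
  assumes "F \<in> coord_ideal p" "G \<in> coord_ideal p"
  shows "(\<lambda>z. F z + G z) \<in> coord_ideal p"
proof -
  obtain r s where "\<forall>j. r j \<in> cpoly_funs" "\<forall>z. F z = (\<Sum>j\<in>UNIV. r j z * poly (p j) (z $ j))"
    "\<forall>j. s j \<in> cpoly_funs" "\<forall>z. G z = (\<Sum>j\<in>UNIV. s j z * poly (p j) (z $ j))"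
    using assms unfolding coord_ideal_def by blast
  then show ?thesis unfolding coord_ideal_def
    by (intro CollectI exI[of _ "\<lambda>j z. r j z + s j z"])
      (simp add: cpoly_funs.add sum.distrib distrib_right)
qed

lemma coord_ideal_mult:
  assumes "F \<in> coord_ideal p" "P \<in> cpoly_funs"
  shows "(\<lambda>z. P z * F z) \<in> coord_ideal p"
proof -
  obtain r where "\<forall>j. r j \<in> cpoly_funs" "\<forall>z. F z = (\<Sum>j\<in>UNIV. r j z * poly (p j) (z $ j))"
    using assms unfolding coord_ideal_def by blast
  with assms(2) show ?thesis unfolding coord_ideal_def
    by (intro CollectI exI[of _ "\<lambda>j z. P z * r j z"])
      (simp add: cpoly_funs.mult sum_distrib_left mult.assoc)
qed

lemma coord_ideal_sum:
  "finite I \<Longrightarrow> (\<And>i. i \<in> I \<Longrightarrow> F i \<in> coord_ideal p) \<Longrightarrow> (\<lambda>z. \<Sum>i\<in>I. F i z) \<in> coord_ideal p"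
proof (induction I rule: finite_induct)
  case (insert a I)
  then show ?case using coord_ideal_add[of "F a" p "\<lambda>z. \<Sum>i\<in>I. F i z"] by simp
qed (simp add: coord_ideal_zero)

lemma coord_ideal_multiple:
  assumes "p j dvd u" "P \<in> cpoly_funs"
  shows "(\<lambda>z. P z * poly u (z $ j)) \<in> coord_ideal p"
proof -
  obtain w where w: "u = p j * w" using assms(1) by (auto elim: dvdE)
  define r where "r j' = (\<lambda>z. if j' = j then P z * poly w (z $ j) else 0)" for j'
  have "r j' \<in> cpoly_funs" for j'
    using assms(2)
    by (cases "j' = j") (simp_all add: r_def cpoly_funs.mult cpoly_funs_poly_coord cpoly_funs.const)
  moreover have "P z * poly u (z $ j) = (\<Sum>j'\<in>UNIV. r j' z * poly (p j') (z $ j'))" for z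
    by (simp add: r_def w if_distrib[of "\<lambda>x. x * _"] cong: if_cong)
  ultimately show ?thesis unfolding coord_ideal_def by blast
qed

lemma coord_ideal_power_add:
  assumes A: "A \<in> cpoly_funs" and B: "B \<in> cpoly_funs"
    and "(\<lambda>z. A z ^ m) \<in> coord_ideal p" and "(\<lambda>z. B z ^ n) \<in> coord_ideal p"
  shows "(\<lambda>z. (A z + B z) ^ (m + n)) \<in> coord_ideal p"
proof -
  have "(\<lambda>z. of_nat (m + n choose k) * A z ^ k * B z ^ (m + n - k)) \<in> coord_ideal p" for k
  proof (cases "m \<le> k")
    case True
    have "(\<lambda>z. (of_nat (m + n choose k) * A z ^ (k - m) * B z ^ (m + n - k)) * A z ^ m) \<in> coord_ideal p"
      using assms by (intro coord_ideal_mult) (auto intro!: cpoly_funs.mult_closed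
          cpoly_funs.power_closed cpoly_funs.const)
    then show ?thesis
      by (rule coord_ideal_cong) (use True in \<open>simp add: mult_ac flip: power_add\<close>)
  next
    case False
    have "(\<lambda>z. (of_nat (m + n choose k) * A z ^ k * B z ^ (m + n - k - n)) * B z ^ n) \<in> coord_ideal p"
      using assms by (intro coord_ideal_mult) (auto intro!: cpoly_funs.mult_closed
          cpoly_funs.power_closed cpoly_funs.const)
    moreover have "B z ^ (m + n - k) = B z ^ (m + n - k - n) * B z ^ n" for z
      using False by (simp flip: power_add)
    ultimately show ?thesis by (simp add: mult_ac)
  qed
  then have "(\<lambda>z. \<Sum>k\<le>m + n. of_nat (m + n choose k) * A z ^ k * B z ^ (m + n - k)) \<in> coord_ideal p"
    by (intro coord_ideal_sum) auto
  then show ?thesis by (rule coord_ideal_cong) (simp add: binomial_ring)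
qed

lemma coord_ideal_power_sum:
  assumes "finite I" "I \<noteq> {}" "\<And>i. i \<in> I \<Longrightarrow> A i \<in> cpoly_funs"
    and "\<And>i. i \<in> I \<Longrightarrow> (\<lambda>z. A i z ^ m) \<in> coord_ideal p"
  shows "(\<lambda>z. (\<Sum>i\<in>I. A i z) ^ (m * card I)) \<in> coord_ideal p"
  using assms
proof (induction I rule: finite_ne_induct)
  case (insert i I)
  have "(\<lambda>z. (A i z + (\<Sum>i\<in>I. A i z)) ^ (m + m * card I)) \<in> coord_ideal p"
    using insert by (intro coord_ideal_power_add cpoly_funs.sum_closed) auto
  then show ?case using insert.hyps by simp
qed simp

lemma coord_ideal_power:
  fixes p q :: "'n::finite \<Rightarrow> complex poly"
  assumes "F \<in> coord_ideal q" "\<And>j. p j dvd q j ^ m"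
  shows "(\<lambda>z. F z ^ (m * CARD('n))) \<in> coord_ideal p"
proof -
  obtain r where r: "\<And>j. r j \<in> cpoly_funs" "\<And>z. F z = (\<Sum>j\<in>UNIV. r j z * poly (q j) (z $ j))"
    using assms(1) unfolding coord_ideal_def by blast
  define A where "A j z = r j z * poly (q j) (z $ j)" for j z
  have "(\<lambda>z. A j z ^ m) \<in> coord_ideal p" for j
  proof -
    have "(\<lambda>z. r j z ^ m * poly (q j ^ m) (z $ j)) \<in> coord_ideal p"
      using r(1) by (intro coord_ideal_multiple assms(2) cpoly_funs.power_closed)
    then show ?thesis by (rule coord_ideal_cong) (simp add: A_def power_mult_distrib poly_power)
  qed
  moreover have "A j \<in> cpoly_funs" for j
    unfolding A_def using r(1) by (intro cpoly_funs.mult cpoly_funs_poly_coord)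
  ultimately have "(\<lambda>z. (\<Sum>j\<in>UNIV. A j z) ^ (m * card (UNIV :: 'n set))) \<in> coord_ideal p"
    by (intro coord_ideal_power_sum) auto
  then show ?thesis by (rule coord_ideal_cong) (simp add: r(2) A_def)
qed

definition lagrange_basis :: "complex set \<Rightarrow> complex \<Rightarrow> complex poly" where
  "lagrange_basis Z r = smult (inverse (\<Prod>r'\<in>Z-{r}. (r - r'))) (\<Prod>r'\<in>Z-{r}. [:- r', 1:])"

lemma poly_lagrange_basis:
  assumes "finite Z" "r \<in> Z" "r' \<in> Z"
  shows "poly (lagrange_basis Z r) r' = (if r' = r then 1 else 0)"
proof -
  have "(\<Prod>r''\<in>Z-{r}. (r' - r'')) = 0 \<longleftrightarrow> r' \<noteq> r"
    using assms by (auto simp: prod_zero_iff)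
  then show ?thesis by (auto simp: lagrange_basis_def poly_prod)
qed

lemma sum_lagrange_basis:
  assumes Z: "finite Z" "Z \<noteq> {}"
  shows "(\<Sum>r\<in>Z. lagrange_basis Z r) = 1"
proof (rule ccontr)
  define D where "D = (\<Sum>r\<in>Z. lagrange_basis Z r) - 1"
  assume "(\<Sum>r\<in>Z. lagrange_basis Z r) \<noteq> 1"
  then have D0: "D \<noteq> 0" by (simp add: D_def)
  have "degree (lagrange_basis Z r) \<le> card Z - 1" if "r \<in> Z" for r
  proof -
    have "degree (lagrange_basis Z r) \<le> degree (\<Prod>r'\<in>Z-{r}. [:- r', 1:])"
      unfolding lagrange_basis_def by (rule degree_smult_le)
    also have "\<dots> = card Z - 1" using Z that by (simp add: degree_prod_linear)
    finally show ?thesis .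
  qed
  then have "degree (\<Sum>r\<in>Z. lagrange_basis Z r) \<le> card Z - 1"
    by (intro degree_sum_le) (use Z in auto)
  then have deg: "degree D \<le> card Z - 1"
    unfolding D_def using degree_diff_le[of _ "card Z - 1" 1] by simp
  have "poly D r0 = 0" if "r0 \<in> Z" for r0
  proof -
    have "poly (\<Sum>r\<in>Z. lagrange_basis Z r) r0 = (\<Sum>r\<in>Z. if r0 = r then 1 else 0)"
      unfolding poly_sum using Z that by (intro sum.cong) (simp_all add: poly_lagrange_basis)
    also have "\<dots> = 1" using Z that by simp
    finally show ?thesis by (simp add: D_def)
  qed
  then have "card Z \<le> card {x. poly D x = 0}"
    by (intro card_mono poly_roots_finite D0) auto
  also have "\<dots> \<le> degree D" by (rule card_poly_roots_bound[OF D0])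
  finally have "card Z \<le> degree D" .
  moreover have "card Z > 0" using Z by (simp add: card_gt_0_iff)
  ultimately show False using deg by linarith
qed

lemma dvd_linear_mult_lagrange_basis:
  assumes "finite Z" "r \<in> Z"
  shows "(\<Prod>r'\<in>Z. [:- r', 1:]) dvd [:- r, 1:] * lagrange_basis Z r"
proof -
  have "[:- r, 1:] * lagrange_basis Z r =
      smult (inverse (\<Prod>r'\<in>Z-{r}. (r - r'))) ([:- r, 1:] * (\<Prod>r'\<in>Z-{r}. [:- r', 1:]))"
    by (simp add: lagrange_basis_def)
  also have "[:- r, 1:] * (\<Prod>r'\<in>Z-{r}. [:- r', 1:]) = (\<Prod>r'\<in>Z. [:- r', 1:])"
    using prod.remove[OF assms, of "\<lambda>r'. [:- r', 1:]"] by simp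
  finally show ?thesis by (metis dvd_refl dvd_smult)
qed

definition grid :: "('n \<Rightarrow> complex set) \<Rightarrow> (complex^'n) set" where
  "grid Z = {s. \<forall>j. s $ j \<in> Z j}"

definition grid_lagrange :: "('n \<Rightarrow> complex set) \<Rightarrow> complex^'n \<Rightarrow> complex^'n \<Rightarrow> complex" where
  "grid_lagrange Z s z = (\<Prod>j\<in>UNIV. poly (lagrange_basis (Z j) (s $ j)) (z $ j))"

lemma bij_betw_grid_PiE: "bij_betw vec_nth (grid Z) (PiE UNIV Z)"
  by (rule bij_betwI[where g=vec_lambda]) (auto simp: grid_def)

lemma finite_grid: "(\<And>j. finite (Z j)) \<Longrightarrow> finite (grid Z)"
  using bij_betw_finite[OF bij_betw_grid_PiE[of Z]] by (simp add: finite_PiE)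

lemma sum_grid_lagrange:
  assumes "\<And>j. finite (Z j)" "\<And>j. Z j \<noteq> {}"
  shows "(\<Sum>s\<in>grid Z. grid_lagrange Z s z) = 1"
proof -
  have "(\<Sum>s\<in>grid Z. grid_lagrange Z s z) =
      (\<Sum>f\<in>PiE UNIV Z. \<Prod>j\<in>UNIV. poly (lagrange_basis (Z j) (f j)) (z $ j))"
    unfolding grid_lagrange_def
    using sum.reindex_bij_betw[OF bij_betw_grid_PiE[of Z],
        of "\<lambda>f. \<Prod>j\<in>UNIV. poly (lagrange_basis (Z j) (f j)) (z $ j)"] by simp
  also have "\<dots> = (\<Prod>j\<in>UNIV. \<Sum>r\<in>Z j. poly (lagrange_basis (Z j) r) (z $ j))"
    by (rule prod_sum_PiE[symmetric]) (use assms in auto)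
  also have "\<dots> = 1" using sum_lagrange_basis[OF assms] by (simp flip: poly_sum)
  finally show ?thesis .
qed

lemma coord_ideal_grid_lagrange_reduce:
  assumes fin: "\<And>j. finite (Z j)" and s: "s \<in> grid Z" and P: "P \<in> cpoly_funs"
  shows "(\<lambda>z. P z * grid_lagrange Z s z - P s * grid_lagrange Z s z)
    \<in> coord_ideal (\<lambda>j. \<Prod>r\<in>Z j. [:- r, 1:])"
  using P
proof (induction rule: cpoly_funs.induct)
  case (const c)
  then show ?case by (simp add: coord_ideal_zero)
next
  case (coord i)
  define P' where "P' z = (\<Prod>j\<in>UNIV-{i}. poly (lagrange_basis (Z j) (s $ j)) (z $ j))" for z
  have "(\<lambda>z. P' z * poly ([:- s $ i, 1:] * lagrange_basis (Z i) (s $ i)) (z $ i))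
      \<in> coord_ideal (\<lambda>j. \<Prod>r\<in>Z j. [:- r, 1:])"
    unfolding P'_def using fin s
    by (intro coord_ideal_multiple dvd_linear_mult_lagrange_basis cpoly_funs.prod_closed
        cpoly_funs_poly_coord) (auto simp: grid_def)
  moreover have "grid_lagrange Z s z = poly (lagrange_basis (Z i) (s $ i)) (z $ i) * P' z" for z
    unfolding grid_lagrange_def P'_def by (rule prod.remove) auto
  ultimately show ?case by (simp add: algebra_simps)
next
  case (add F G)
  then show ?case
    by (intro coord_ideal_cong[OF coord_ideal_add[OF add.IH]]) (simp add: algebra_simps)
next
  case (mult F G)
  have "(\<lambda>z. F z * (G z * grid_lagrange Z s z - G s * grid_lagrange Z s z)
      + G s * (F z * grid_lagrange Z s z - F s * grid_lagrange Z s z))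
    \<in> coord_ideal (\<lambda>j. \<Prod>r\<in>Z j. [:- r, 1:])"
    using mult by (intro coord_ideal_add coord_ideal_mult) (auto intro: cpoly_funs.const)
  then show ?case by (rule coord_ideal_cong) (simp add: algebra_simps)
qed

lemma coord_ideal_vanishing_on_grid:
  assumes fin: "\<And>j. finite (Z j)" and ne: "\<And>j. Z j \<noteq> {}" and P: "P \<in> cpoly_funs"
    and van: "\<And>s. s \<in> grid Z \<Longrightarrow> P s = 0"
  shows "P \<in> coord_ideal (\<lambda>j. \<Prod>r\<in>Z j. [:- r, 1:])"
proof -
  have "(\<lambda>z. \<Sum>s\<in>grid Z. P z * grid_lagrange Z s z - P s * grid_lagrange Z s z)
      \<in> coord_ideal (\<lambda>j. \<Prod>r\<in>Z j. [:- r, 1:])"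
    using finite_grid[OF fin] coord_ideal_grid_lagrange_reduce[OF fin _ P]
    by (intro coord_ideal_sum) auto
  moreover have "(\<Sum>s\<in>grid Z. P z * grid_lagrange Z s z - P s * grid_lagrange Z s z) = P z" for z
    using van sum_grid_lagrange[of Z z, OF fin ne] by (simp flip: sum_distrib_left)
  ultimately show ?thesis by simp
qed

lemma dvd_prod_roots_power:
  fixes p :: "complex poly"
  assumes p: "p \<noteq> 0" and deg: "degree p \<le> m"
  shows "p dvd (\<Prod>r\<in>{r. poly p r = 0}. [:- r, 1:]) ^ m"
proof -
  have "p = smult (lead_coeff p) (\<Prod>r\<in>{r. poly p r = 0}. [:- r, 1:] ^ order r p)"
    by (rule complex_poly_decompose[symmetric])
  also have "\<dots> dvd (\<Prod>r\<in>{r. poly p r = 0}. [:- r, 1:] ^ m)"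
    unfolding smult_dvd_iff using p
    by (simp, intro prod_dvd_prod le_imp_power_dvd) (use order_degree[OF p] deg in \<open>auto intro: le_trans\<close>)
  finally show ?thesis by (simp add: prod_power_distrib)
qed

lemma coord_ideal_vanishing_on_roots:
  fixes p :: "'n::finite \<Rightarrow> complex poly"
  assumes deg: "\<And>j. 0 < degree (p j)" "\<And>j. degree (p j) \<le> m"
    and F: "F \<in> cpoly_funs" and van: "\<And>s. (\<And>j. poly (p j) (s $ j) = 0) \<Longrightarrow> F s = 0"
  shows "(\<lambda>z. F z ^ (m * CARD('n))) \<in> coord_ideal p"
proof -
  define Z where "Z j = {r. poly (p j) r = 0}" for j
  have p0: "p j \<noteq> 0" for j using deg(1)[of j] by auto
  have "finite (Z j)" for j unfolding Z_def using poly_roots_finite[OF p0] .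
  moreover have "Z j \<noteq> {}" for j
    using fundamental_theorem_of_algebra[of "p j"] deg(1)[of j] by (auto simp: Z_def constant_degree)
  ultimately have "F \<in> coord_ideal (\<lambda>j. \<Prod>r\<in>Z j. [:- r, 1:])"
    using F van by (intro coord_ideal_vanishing_on_grid) (auto simp: grid_def Z_def)
  then show ?thesis
    by (rule coord_ideal_power) (simp add: Z_def dvd_prod_roots_power[OF p0 deg(2)])
qed

section \<open>Homomorphisms of invariant rings are evaluations\<close>

definition evaluates_at ::
    "(real^'n \<Rightarrow> real) set \<Rightarrow> ((real^'n \<Rightarrow> real) \<Rightarrow> real) \<Rightarrow> complex^'n \<Rightarrow> bool" where
  "evaluates_at S \<phi> z \<longleftrightarrow> (\<forall>f\<in>S. \<forall>F. cpoly_extends F f \<longrightarrow> F z = complex_of_real (\<phi> f))"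

lemma evaluates_at_real_point:
  assumes "evaluates_at S \<phi> (cvec x)" "f \<in> S" "f \<in> poly_funs"
  shows "\<phi> f = f x"
proof -
  obtain F where "cpoly_extends F f" using assms(3) by (rule poly_funs_obtain_cpoly_extension)
  then show ?thesis using assms(1,2) by (force simp: evaluates_at_def cpoly_extends_def)
qed

lemma (in subring_hom) obtain_vanishing_outside_kernel:
  assumes "finite W" "\<And>w. w \<in> W \<Longrightarrow> \<not> evaluates_at S \<phi> w"
  obtains h H where "h \<in> S" "cpoly_extends H h" "\<And>w. w \<in> W \<Longrightarrow> H w = 0" "\<phi> h \<noteq> 0"
proof -
  have "\<forall>w\<in>W. \<exists>fF. fst fF \<in> S \<and> cpoly_extends (snd fF) (fst fF) \<and> snd fF w \<noteq> of_real (\<phi> (fst fF))"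
    using assms(2) by (fastforce simp: evaluates_at_def)
  from bchoice[OF this] obtain fF where fF: "\<forall>w\<in>W. fst (fF w) \<in> S \<and>
      cpoly_extends (snd (fF w)) (fst (fF w)) \<and> snd (fF w) w \<noteq> of_real (\<phi> (fst (fF w)))" ..
  define f F where "f w = fst (fF w)" and "F w = snd (fF w)" for w
  have fF: "\<And>w. w \<in> W \<Longrightarrow> f w \<in> S"
    "\<And>w. w \<in> W \<Longrightarrow> cpoly_extends (F w) (f w)" "\<And>w. w \<in> W \<Longrightarrow> F w w \<noteq> of_real (\<phi> (f w))"
    using fF by (simp_all add: f_def F_def)
  define a b where "a w = Re (F w w)" and "b w = Im (F w w)" for w
  define h where "h x = (\<Prod>w\<in>W. (f w x - a w)^2 + (b w)^2)" for x
  define H where "H z = (\<Prod>w\<in>W. (F w z - of_real (a w))^2 + of_real ((b w)^2))" for z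
  have "h \<in> S"
    unfolding h_def using assms(1) fF(1)
    by (intro prod_closed add_closed power_closed diff_closed const_closed)
  moreover have "cpoly_extends H h"
    using assms(1) fF(2) unfolding H_def h_def cpoly_extends_def
    by (auto intro!: cpoly_funs.prod_closed cpoly_funs.add cpoly_funs.power_closed
        cpoly_funs.diff_closed cpoly_funs.const)
  moreover have "H w = 0" if "w \<in> W" for w
  proof -
    have "(F w w - of_real (a w))^2 + of_real ((b w)^2) = 0"
      by (simp add: a_def b_def complex_eq_iff power2_eq_square)
    then show ?thesis unfolding H_def using assms(1) that by (intro prod_zero) auto
  qed
  moreover have "\<phi> h \<noteq> 0"
  proof -
    have "\<phi> h = (\<Prod>w\<in>W. (\<phi> (f w) - a w)^2 + (b w)^2)"
      unfolding h_def using assms(1) fF(1)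
      by (simp add: hom_prod hom_add hom_power hom_diff hom_const add_closed power_closed
          diff_closed const_closed)
    moreover have "(\<phi> (f w) - a w)^2 + (b w)^2 \<noteq> 0" if "w \<in> W" for w
      using fF(3)[OF that] by (auto simp: a_def b_def complex_eq_iff sum_power2_eq_zero_iff)
    ultimately show ?thesis using assms(1) by simp
  qed
  ultimately show ?thesis by (rule that)
qed

lemma hom_vanishes_on_kernel_extension:
  assumes K: "finite_orth_group K" and hom: "ring_hom_on (inv_polys K) \<phi>"
    and h: "h \<in> inv_polys K" and I: "finite I"
    and e: "\<And>i. i \<in> I \<Longrightarrow> e i \<in> inv_polys K" "\<And>i. i \<in> I \<Longrightarrow> \<phi> (e i) = 0"
    and u: "\<And>i. i \<in> I \<Longrightarrow> u i \<in> poly_funs"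
    and h_eq: "\<And>x. h x = (\<Sum>i\<in>I. e i x * u i x)"
  shows "\<phi> h = 0"
proof -
  interpret subring_hom "inv_polys K" \<phi> using hom by (rule subring_hom_inv_polys)
  define N where "N = real (card K)"
  have "N > 0" using K by (auto simp: N_def finite_orth_group_def card_gt_0_iff)
  define R where "R i = (\<lambda>x. (\<Sum>g\<in>K. u i (g *v x)) / N)" for i
  have R: "R i \<in> inv_polys K" if "i \<in> I" for i
    unfolding inv_polys_iff[OF K]
  proof (intro conjI ballI allI)
    have "(\<lambda>x. (1 / N) * (\<Sum>g\<in>K. u i (g *v x))) \<in> poly_funs"
      using K u[OF that] by (intro poly_funs.mult_closed poly_funs.const_closed poly_funs.sum_closed
          poly_funs_compose_matrix) (auto simp: finite_orth_group_def)
    then show "R i \<in> poly_funs" by (simp add: R_def)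
    show "R i (\<sigma> *v x) = R i x" if "\<sigma> \<in> K" for \<sigma> x
      using sum_group_reindex[OF K that, of "\<lambda>g. u i (g *v x)"]
      by (simp add: R_def matrix_vector_mul_assoc)
  qed
  have "h x = (\<Sum>i\<in>I. e i x * R i x)" for x
  proof -
    have "h x = (\<Sum>g\<in>K. h (g *v x)) / N"
      using h K \<open>N > 0\<close> by (simp add: inv_polys_iff N_def)
    also have "\<dots> = (\<Sum>g\<in>K. \<Sum>i\<in>I. e i x * u i (g *v x)) / N"
      using e(1) K by (simp add: h_eq inv_polys_iff)
    also have "\<dots> = (\<Sum>i\<in>I. e i x * R i x)"
      by (simp add: R_def sum_divide_distrib sum_distrib_left sum.swap[of _ K])
    finally show ?thesis .
  qed
  then have "h = (\<lambda>x. \<Sum>i\<in>I. e i x * R i x)" ..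
  then have "\<phi> h = (\<Sum>i\<in>I. \<phi> (e i) * \<phi> (R i))"
    using I e(1) R by (simp add: hom_sum hom_mult mult_closed)
  then show ?thesis using e(2) by simp
qed

text \<open>The image under \<open>\<phi>\<close> of the orbit polynomial of \<open>X_j\<close>: its roots are the candidates for the
  \<open>j\<close>-th coordinate of a point at which \<open>\<phi>\<close> is evaluation.\<close>

definition hom_coord_poly ::
    "(real^'n^'n) set \<Rightarrow> ((real^'n \<Rightarrow> real) \<Rightarrow> real) \<Rightarrow> 'n \<Rightarrow> complex poly" where
  "hom_coord_poly K \<phi> j = (\<Sum>k\<le>card K. monom (complex_of_real (\<phi> (orbit_coeff K (\<lambda>x. x $ j) k))) k)"

lemma degree_hom_coord_poly:
  assumes K: "finite_orth_group K" and hom: "ring_hom_on (inv_polys K) \<phi>"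
  shows "degree (hom_coord_poly K \<phi> j) = card K"
proof -
  interpret subring_hom "inv_polys K" \<phi> using hom by (rule subring_hom_inv_polys)
  have coeff: "coeff (hom_coord_poly K \<phi> j) k =
      (if k \<le> card K then complex_of_real (\<phi> (orbit_coeff K (\<lambda>x. x $ j) k)) else 0)" for k
    by (simp add: hom_coord_poly_def coeff_sum)
  have "\<phi> (orbit_coeff K (\<lambda>x. x $ j) (card K)) = 1"
    using K by (simp add: orbit_coeff_card finite_orth_group_def hom_const)
  then show ?thesis
    by (intro antisym degree_le le_degree) (simp_all add: coeff)
qed

lemma poly_hom_coord_poly:
  assumes K: "finite_orth_group K"
  shows "poly (hom_coord_poly K \<phi> j) (of_real (x $ j)) =
    of_real (\<Sum>k\<le>card K. (\<phi> (orbit_coeff K (\<lambda>x. x $ j) k) - orbit_coeff K (\<lambda>x. x $ j) k x) * (x $ j) ^ k)"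
  using orbit_coeff_root[OF K, of "\<lambda>x. x $ j" x]
  by (simp add: hom_coord_poly_def poly_sum poly_monom algebra_simps sum_subtractf)

lemma hom_vanishes_on_coord_ideal:
  fixes K :: "(real^'n^'n) set"
  assumes K: "finite_orth_group K" and hom: "ring_hom_on (inv_polys K) \<phi>"
    and h: "h \<in> inv_polys K" "cpoly_extends H h" and H: "H \<in> coord_ideal (hom_coord_poly K \<phi>)"
  shows "\<phi> h = 0"
proof -
  interpret subring_hom "inv_polys K" \<phi> using hom by (rule subring_hom_inv_polys)
  obtain r where r: "\<And>j. r j \<in> cpoly_funs"
    "\<And>z. H z = (\<Sum>j\<in>UNIV. r j z * poly (hom_coord_poly K \<phi> j) (z $ j))"
    using H unfolding coord_ideal_def by blast
  define E where "E j = orbit_coeff K (\<lambda>x. x $ j)" for j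
  define e where "e = (\<lambda>(j, k) x. \<phi> (E j k) - E j k x)"
  define u where "u = (\<lambda>(j, k) x. Re (r j (cvec x)) * (x $ j) ^ k)"
  have "h x = (\<Sum>jk\<in>UNIV \<times> {..card K}. e jk x * u jk x)" for x
  proof -
    have "complex_of_real (h x) = H (cvec x)"
      using h(2) by (simp add: cpoly_extends_def)
    also have "\<dots> = (\<Sum>j\<in>UNIV. r j (cvec x) * of_real (\<Sum>k\<le>card K. e (j, k) x * (x $ j) ^ k))"
      by (simp add: r(2) poly_hom_coord_poly[OF K] e_def E_def)
    finally have "h x = Re (\<Sum>j\<in>UNIV. r j (cvec x) * of_real (\<Sum>k\<le>card K. e (j, k) x * (x $ j) ^ k))"
      by (metis Re_complex_of_real)
    then have "h x = (\<Sum>j\<in>UNIV. \<Sum>k\<le>card K. e (j, k) x * u (j, k) x)"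
      by (simp add: u_def sum_distrib_left mult_ac)
    then show ?thesis by (simp add: sum.cartesian_product case_prod_unfold)
  qed
  moreover have "e jk \<in> inv_polys K" "\<phi> (e jk) = 0" for jk
    using orbit_coeff_inv_polys[OF K poly_funs.coord]
    by (auto simp: e_def E_def case_prod_beta diff_closed const_closed hom_diff hom_const)
  moreover have "u jk \<in> poly_funs" for jk
    using poly_funs_Re_Im[OF r(1)]
    by (auto simp: u_def case_prod_beta intro!: poly_funs.mult_closed poly_funs.power_closed poly_funs.coord)
  ultimately show ?thesis
    by (intro hom_vanishes_on_kernel_extension[OF K hom h(1), of "UNIV \<times> {..card K}" e u]) auto
qed

lemma ring_hom_evaluates_at_point:
  fixes K :: "(real^'n^'n) set"
  assumes K: "finite_orth_group K" and hom: "ring_hom_on (inv_polys K) \<phi>"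
  shows "\<exists>z. evaluates_at (inv_polys K) \<phi> z"
proof (rule ccontr)
  interpret subring_hom "inv_polys K" \<phi> using hom by (rule subring_hom_inv_polys)
  define p where "p = hom_coord_poly K \<phi>"
  define W where "W = {s. \<forall>j. poly (p j) (s $ j) = 0}"
  have "card K > 0" using K by (auto simp: finite_orth_group_def card_gt_0_iff)
  have deg: "degree (p j) = card K" for j
    unfolding p_def by (rule degree_hom_coord_poly[OF K hom])
  have "finite W"
  proof -
    have "p j \<noteq> 0" for j using deg[of j] \<open>card K > 0\<close> by auto
    then have "finite (grid (\<lambda>j. {r. poly (p j) r = 0}))" by (intro finite_grid poly_roots_finite)
    then show ?thesis by (simp add: W_def grid_def)
  qed
  assume "\<nexists>z. evaluates_at (inv_polys K) \<phi> z"
  then obtain h H where h: "h \<in> inv_polys K" "cpoly_extends H h" "\<And>w. w \<in> W \<Longrightarrow> H w = 0"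
    and "\<phi> h \<noteq> 0"
    using obtain_vanishing_outside_kernel[OF \<open>finite W\<close>] by blast
  define M where "M = card K * CARD('n)"
  have "(\<lambda>z. H z ^ M) \<in> coord_ideal p"
    unfolding M_def using deg \<open>card K > 0\<close> h(2,3)
    by (intro coord_ideal_vanishing_on_roots) (auto simp: cpoly_extends_def W_def)
  then have "\<phi> (\<lambda>x. h x ^ M) = 0"
    using h(1,2) unfolding p_def
    by (intro hom_vanishes_on_coord_ideal[OF K hom])
      (simp_all add: power_closed cpoly_extends_def cpoly_funs.power_closed)
  then show False using \<open>\<phi> h \<noteq> 0\<close> h(1) by (simp add: hom_power)
qed

section \<open>The evaluation point is real\<close>

lemma cpoly_funs_indicator:
  assumes "finite W" "w \<in> W"
  obtains L where "L \<in> cpoly_funs" "L w = 1" "\<And>u. u \<in> W \<Longrightarrow> u \<noteq> w \<Longrightarrow> L u = 0"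
proof -
  have "\<exists>c. u $ c \<noteq> w $ c" if "u \<noteq> w" for u using that by (simp add: vec_eq_iff)
  then obtain c where c: "\<And>u. u \<noteq> w \<Longrightarrow> u $ c u \<noteq> w $ c u" by metis
  define L where "L X = (\<Prod>u\<in>W-{w}. (X $ c u - u $ c u) / (w $ c u - u $ c u))" for X
  have "L \<in> cpoly_funs"
    unfolding L_def divide_inverse using assms(1)
    by (intro cpoly_funs.prod_closed cpoly_funs.mult_closed cpoly_funs.diff_closed cpoly_funs.intros) auto
  moreover have "L w = 1"
    unfolding L_def by (intro prod.neutral) (auto simp: right_minus_eq dest!: c)
  moreover have "L u = 0" if "u \<in> W" "u \<noteq> w" for u
    unfolding L_def using assms(1) that by (intro prod_zero) (auto intro!: bexI[of _ u])
  ultimately show ?thesis by (rule that)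
qed

lemma cpartial_affine:
  "cpartial k (\<lambda>X. \<Sum>j\<in>UNIV. c $ j * (X $ j - w $ j)) u = c $ k"
proof -
  have coord: "cpartial k (\<lambda>X. X $ j - w $ j) u = (if j = k then 1 else 0)" for j
    by (rule cpartial_eqI) (auto simp: axis_def intro!: derivative_eq_intros)
  have "cpartial k (\<lambda>X. \<Sum>j\<in>UNIV. c $ j * (X $ j - w $ j)) u = (\<Sum>j\<in>UNIV. c $ j * (if j = k then 1 else 0))"
    by (simp add: coord cpartial_sum cpartial_mult cpoly_funs.intros cpoly_funs.diff_closed)
  also have "\<dots> = (\<Sum>j\<in>UNIV. if j = k then c $ j else 0)" by (rule sum.cong) auto
  finally show ?thesis by simp
qed

lemma cpoly_funs_prescribed_gradient:
  assumes "finite W"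
  obtains Q where "Q \<in> cpoly_funs" "\<And>w k. w \<in> W \<Longrightarrow> cpartial k Q w = v w $ k"
proof -
  have "\<forall>w\<in>W. \<exists>L. L \<in> cpoly_funs \<and> L w = 1 \<and> (\<forall>u\<in>W. u \<noteq> w \<longrightarrow> L u = 0)"
    using cpoly_funs_indicator[OF assms] by (metis (no_types))
  from bchoice[OF this] obtain L where "\<forall>w\<in>W. L w \<in> cpoly_funs \<and> L w w = 1 \<and>
      (\<forall>u\<in>W. u \<noteq> w \<longrightarrow> L w u = 0)" ..
  then have L: "\<And>w. w \<in> W \<Longrightarrow> L w \<in> cpoly_funs" "\<And>w. w \<in> W \<Longrightarrow> L w w = 1"
    "\<And>w u. w \<in> W \<Longrightarrow> u \<in> W \<Longrightarrow> u \<noteq> w \<Longrightarrow> L w u = 0" by blast+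
  define M where "M w = (\<lambda>X. \<Sum>j\<in>UNIV. v w $ j * (X $ j - w $ j))" for w
  have M: "M w \<in> cpoly_funs" for w
    unfolding M_def
    by (intro cpoly_funs.sum_closed cpoly_funs.mult_closed cpoly_funs.diff_closed cpoly_funs.intros) auto
  define Q where "Q X = (\<Sum>w\<in>W. L w X * (L w X * M w X))" for X
  \<comment> \<open>the summand for \<open>w\<close> vanishes to second order at the other points of \<open>W\<close>\<close>
  have "cpartial k (\<lambda>X. L w X * (L w X * M w X)) u = (if w = u then v u $ k else 0)"
    if "w \<in> W" "u \<in> W" for w u k
  proof -
    have "cpartial k (\<lambda>X. L w X * (L w X * M w X)) u = cpartial k (L w) u * (L w u * M w u)
        + L w u * (cpartial k (L w) u * M w u + L w u * v w $ k)"
      using L(1)[OF that(1)] M by (simp add: cpartial_mult cpoly_funs.mult M_def cpartial_affine)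
    then show ?thesis using L(2,3)[OF that(1)] that(2) by (cases "w = u") (simp_all add: M_def)
  qed
  then have "cpartial k Q u = v u $ k" if "u \<in> W" for u k
    unfolding Q_def[abs_def] using assms L(1) M that by (simp add: cpartial_sum cpoly_funs.mult)
  moreover have "Q \<in> cpoly_funs"
    unfolding Q_def[abs_def] using assms L(1) M by (intro cpoly_funs.sum_closed cpoly_funs.mult) auto
  ultimately show ?thesis using that by blast
qed

lemma cpoly_funs_real_with_imaginary_gradient:
  assumes "finite W" and W: "\<And>w. w \<in> W \<Longrightarrow> cnjv w \<in> W"
  shows "\<exists>P. P \<in> cpoly_funs \<and> (\<forall>x. Im (P (cvec x)) = 0) \<and>
    (\<forall>w\<in>W. \<forall>k. cpartial k P w = 2 * \<i> * of_real (Im (w $ k)))"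
proof -
  obtain Q where Q: "Q \<in> cpoly_funs" "\<And>w k. w \<in> W \<Longrightarrow> cpartial k Q w = \<i> * of_real (Im (w $ k))"
    by (rule cpoly_funs_prescribed_gradient[OF assms(1), where v="\<lambda>w. \<chi> k. \<i> * of_real (Im (w $ k))"])
      simp
  define P where "P X = Q X + cnj (Q (cnjv X))" for X
  have "P \<in> cpoly_funs"
    unfolding P_def[abs_def] using Q(1) by (intro cpoly_funs.add cpoly_funs_cnj)
  moreover have "Im (P (cvec x)) = 0" for x by (simp add: P_def)
  \<comment> \<open>as \<open>W\<close> is closed under conjugation, the two halves of \<open>P\<close> contribute equally\<close>
  moreover have "cpartial k P w = 2 * \<i> * of_real (Im (w $ k))" if "w \<in> W" for w k
    unfolding P_def[abs_def] using Q that W[OF that] by (simp add: cpartial_add cpartial_cnj cpoly_funs_cnj)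
  ultimately show ?thesis by blast
qed

lemma transpose_orthogonal_mult_nth:
  assumes "orthogonal_matrix (A::real^'n^'n)"
  shows "(\<Sum>k\<in>UNIV. A $ k $ j * (A *v y) $ k) = y $ j"
proof -
  have "transpose A *v (A *v y) = y"
    using assms by (simp add: matrix_vector_mul_assoc orthogonal_matrix_def)
  then show ?thesis by (simp add: vec_eq_iff vector_matrix_mult_def mult.commute)
qed

lemma exists_invariant_with_imaginary_gradient:
  fixes K :: "(real^'n^'n) set"
  assumes K: "finite_orth_group K"
  shows "\<exists>f F. f \<in> inv_polys K \<and> cpoly_extends F f \<and>
    (\<forall>j. cpartial j F z = \<i> * of_real (2 * real (card K) * Im (z $ j)))"
proof -
  define W where "W = (\<lambda>g. cmat g *v z) ` K \<union> (\<lambda>g. cnjv (cmat g *v z)) ` K"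
  have "finite W" using K by (simp add: W_def finite_orth_group_def)
  moreover have "cnjv w \<in> W" if "w \<in> W" for w using that by (auto simp: W_def)
  ultimately have "\<exists>P. P \<in> cpoly_funs \<and> (\<forall>x. Im (P (cvec x)) = 0) \<and>
      (\<forall>w\<in>W. \<forall>k. cpartial k P w = 2 * \<i> * of_real (Im (w $ k)))"
    by (rule cpoly_funs_real_with_imaginary_gradient)
  then obtain P where P: "P \<in> cpoly_funs" "\<And>x. Im (P (cvec x)) = 0"
    "\<And>w k. w \<in> W \<Longrightarrow> cpartial k P w = 2 * \<i> * of_real (Im (w $ k))"
    by blast
  define F where "F X = (\<Sum>g\<in>K. P (cmat g *v X))" for X
  define f where "f x = (\<Sum>g\<in>K. Re (P (cvec (g *v x))))" for x
  have Ff: "cpoly_extends F f"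
    unfolding cpoly_extends_def F_def[abs_def] f_def using K P(1,2)
    by (auto simp: cmat_mult_cvec complex_eq_iff finite_orth_group_def
        intro!: cpoly_funs.sum_closed cpoly_funs_compose_matrix)
  have "f \<in> inv_polys K"
    unfolding inv_polys_iff[OF K]
  proof (intro conjI ballI allI)
    show "f \<in> poly_funs" using Ff by (rule cpoly_extends_poly_funs)
    show "f (\<sigma> *v x) = f x" if "\<sigma> \<in> K" for \<sigma> x
      using sum_group_reindex[OF K that, of "\<lambda>g. Re (P (cvec (g *v x)))"]
      by (simp add: f_def matrix_vector_mul_assoc)
  qed
  moreover have "cpartial j F z = \<i> * of_real (2 * real (card K) * Im (z $ j))" for j
  proof -
    have "cpartial j F z = (\<Sum>g\<in>K. \<Sum>k\<in>UNIV. of_real (g $ k $ j) * cpartial k P (cmat g *v z))"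
      unfolding F_def[abs_def] using K P(1)
      by (simp add: cpartial_sum cpartial_compose_matrix cpoly_funs_compose_matrix finite_orth_group_def)
    also have "\<dots> = (\<Sum>g\<in>K. 2 * \<i> * of_real (\<Sum>k\<in>UNIV. g $ k $ j * (g *v imv z) $ k))"
      using P(3) by (simp add: W_def sum_distrib_left imv_cmat_mult[symmetric] mult_ac)
    also have "\<dots> = (\<Sum>g\<in>K. 2 * \<i> * of_real (Im (z $ j)))"
      using K by (intro sum.cong) (simp_all add: transpose_orthogonal_mult_nth finite_orth_group_def)
    finally show ?thesis by simp
  qed
  ultimately show ?thesis using Ff by blast
qed

lemma evaluates_at_real_if_dd_nonneg:
  fixes K :: "(real^'n^'n) set"
  assumes K: "finite_orth_group K" and nonneg: "\<forall>f\<in>inv_polys K. \<phi> (dd f) \<ge> 0"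
    and ev: "evaluates_at (inv_polys K) \<phi> z"
  shows "\<exists>x. z = cvec x"
proof (rule ccontr)
  assume "\<nexists>x. z = cvec x"
  then have "imv z \<bullet> imv z > 0" by (simp add: exists_cvec_iff_imv_eq_0)
  obtain f F where f: "f \<in> inv_polys K" "cpoly_extends F f"
    and dF: "\<And>j. cpartial j F z = \<i> * of_real (2 * real (card K) * Im (z $ j))"
    using exists_invariant_with_imaginary_gradient[OF K] by blast
  have "complex_of_real (\<phi> (dd f)) = cdd F z"
    using ev dd_inv_polys[OF K f(1)] cpoly_extends_dd[OF f(2)] by (simp add: evaluates_at_def)
  also have "\<dots> = (\<Sum>j\<in>UNIV. - of_real ((2 * real (card K) * Im (z $ j))^2))"
    by (simp add: cdd_def dF power_mult_distrib)
  also have "\<dots> = of_real (- ((2 * real (card K))^2 * (imv z \<bullet> imv z)))"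
    by (simp add: inner_vec_def power_mult_distrib sum_distrib_left power2_eq_square sum_negf mult_ac)
  finally have "\<phi> (dd f) = - ((2 * real (card K))^2 * (imv z \<bullet> imv z))"
    by (simp only: of_real_eq_iff)
  moreover have "card K > 0" using K by (auto simp: finite_orth_group_def card_gt_0_iff)
  ultimately have "\<phi> (dd f) < 0" using \<open>imv z \<bullet> imv z > 0\<close> by (simp add: mult_pos_pos)
  then show False using nonneg f(1) by fastforce
qed

section \<open>Lying over\<close>

lemma (in subring_hom) evaluates_at_orbit_point:
  assumes G: "finite_orth_group G" and S: "inv_polys G \<subseteq> S" "S \<subseteq> poly_funs"
    and ev: "evaluates_at (inv_polys G) \<phi> z"
  shows "\<exists>g\<in>G. evaluates_at S \<phi> (cmat g *v z)"
proof (rule ccontr)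
  have finG: "finite G" using G by (simp add: finite_orth_group_def)
  assume no_point: "\<not> (\<exists>g\<in>G. evaluates_at S \<phi> (cmat g *v z))"
  obtain h H where h: "h \<in> S" "cpoly_extends H h"
    "\<And>w. w \<in> (\<lambda>g. cmat g *v z) ` G \<Longrightarrow> H w = 0" and "\<phi> h \<noteq> 0"
    by (rule obtain_vanishing_outside_kernel[of "(\<lambda>g. cmat g *v z) ` G"]) (use finG no_point in auto)
  have H_orbit: "H (cmat g *v z) = 0" if "g \<in> G" for g using h(3) that by blast
  define N where "N = card G"
  define c where "c = orbit_coeff G h"
  define C where "C k = (\<lambda>X. coeff (\<Prod>g\<in>G. [:- H (cmat g *v X), 1:]) k)" for k
  have c: "c k \<in> inv_polys G" for k
    unfolding c_def using h(1) S(2) by (intro orbit_coeff_inv_polys[OF G]) auto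
  \<comment> \<open>\<open>\<phi>\<close> maps the \<open>c k\<close> to the coefficients of \<open>prod_(g in G) (T - H (g z)) = T^|G|\<close>\<close>
  have "cpoly_extends (C k) (c k)" for k
    unfolding C_def c_def orbit_coeff_def using finG cpoly_extends_compose_matrix[OF h(2)]
    by (intro cpoly_extends_coeff_prod_linear)
  then have \<phi>c: "C k z = complex_of_real (\<phi> (c k))" for k
    using ev c unfolding evaluates_at_def by blast
  have "(\<Sum>k\<le>N. c k x * h x ^ k) = 0" for x
    unfolding c_def N_def by (rule orbit_coeff_root[OF G])
  then have "0 = \<phi> (\<lambda>x. \<Sum>k\<le>N. c k x * h x ^ k)"
    by (simp add: hom_const)
  also have "\<dots> = (\<Sum>k\<le>N. \<phi> (c k) * \<phi> h ^ k)"
    using c S(1) h(1) by (simp add: hom_sum hom_mult hom_power mult_closed power_closed subsetD)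
  finally have "0 = complex_of_real (\<Sum>k\<le>N. \<phi> (c k) * \<phi> h ^ k)" by simp
  also have "\<dots> = (\<Sum>k\<le>N. C k z * of_real (\<phi> h) ^ k)" by (simp add: \<phi>c)
  also have "\<dots> = poly (\<Prod>g\<in>G. [:- H (cmat g *v z), 1:]) (of_real (\<phi> h))"
    unfolding C_def N_def using finG by (simp add: poly_prod_linear_eq_sum_coeff)
  also have "\<dots> = (\<Prod>g\<in>G. of_real (\<phi> h))"
    using H_orbit by (simp add: poly_prod cong: prod.cong)
  also have "\<dots> = of_real (\<phi> h) ^ N" by (simp add: N_def)
  finally show False using \<open>\<phi> h \<noteq> 0\<close> by simp
qed

theorem proposition2p8:
  fixes G H :: "(real^'n^'n) set"
    and \<phi> \<phi>H :: "(real^'n \<Rightarrow> real) \<Rightarrow> real"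
  assumes "finite_orth_group G"
    and "matrix_subgroup H G"
    and "ring_hom_on (inv_polys G) \<phi>"
    and "\<forall>f\<in>inv_polys G. \<phi> (dd f) \<ge> 0"
    and "ring_hom_on (inv_polys H) \<phi>H"
    and "\<forall>f\<in>inv_polys G. \<phi>H f = \<phi> f"
  shows "\<forall>f\<in>inv_polys H. \<phi>H (dd f) \<ge> 0"
proof
  fix f assume f: "f \<in> inv_polys H"
  have H: "finite_orth_group H" using assms(1,2) by (rule finite_orth_group_subgroup)
  have GH: "inv_polys G \<subseteq> inv_polys H"
    using assms(2) by (auto simp: inv_polys_def matrix_subgroup_def)
  have H_poly: "inv_polys H \<subseteq> poly_funs" by (auto simp: inv_polys_def)
  obtain z where z: "evaluates_at (inv_polys G) \<phi> z"
    using ring_hom_evaluates_at_point[OF assms(1,3)] by blast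
  obtain x where x: "z = cvec x"
    using evaluates_at_real_if_dd_nonneg[OF assms(1,4) z] by blast
  have "evaluates_at (inv_polys G) \<phi>H (cvec x)"
    using z x assms(6) by (simp add: evaluates_at_def)
  then have "\<exists>g\<in>G. evaluates_at (inv_polys H) \<phi>H (cmat g *v cvec x)"
    by (rule subring_hom.evaluates_at_orbit_point[OF subring_hom_inv_polys[OF assms(5)] assms(1) GH H_poly])
  then obtain g where "evaluates_at (inv_polys H) \<phi>H (cvec (g *v x))"
    by (auto simp: cmat_mult_cvec)
  then have "\<phi>H (dd f) = dd f (g *v x)"
    using dd_inv_polys[OF H f] H_poly by (intro evaluates_at_real_point) auto
  also have "\<dots> \<ge> 0" unfolding dd_def by (intro sum_nonneg) simp
  finally show "\<phi>H (dd f) \<ge> 0" .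
qed

end
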